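(* Let $T>0$, let $f:(0,T)\to\mathbb{R}$ be nondecreasing and $g:(0,T)\to\mathbb{R}$ be of bounded variation, both left-continuous and bounded, with $f\ge g$ on $(0,T)$, and suppose there is $C>0$ such that: (i) for every $\varepsilon>0$, every $t$ with $f(t)>g(t)+\varepsilon$ and every $t'$ with $0\le t'-t<\varepsilon/C$, $f(t')=f(t)$ and $f(t')>g(t')$; (ii) $f(t^+)-f(t)=[g(t^+)-g(t)]^+$ for all $t$; (iii) $g(t_2)-g(t_1)\le C(t_2-t_1)$ for all $t_1<t_2$ in $[a,b)$ whenever $[a,b)\subset\{f>g\}$. Then for every $[a,b)\subset(0,T)$, $$(\partial_tg)^+([a,b))\le f(b)-f(a)+C\,\mathcal{L}^1([a,b)\cap\{f>g\}).$$
   Context: $(\partial_tg)^+$ is the positive part of the distributional derivative of $g$; for left-continuous $g$, $(\partial_tg)^+([a,b))=\sup\{\sum_{i=1}^m(g(t_i)-g(t_{i-1}))^+:a=t_0<t_1<\dots<t_m=b\}$. $h(t^+)$ denotes the right limit. *)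

theory Defs
  imports "HOL-Analysis.Analysis"
begin

definition bounded_variation_on :: "(real \<Rightarrow> real) \<Rightarrow> real set \<Rightarrow> bool" where
  "bounded_variation_on g S \<longleftrightarrow>
     (\<exists>B. \<forall>(t::nat \<Rightarrow> real) m. (\<forall>i\<le>m. t i \<in> S) \<and> (\<forall>i<m. t i < t (Suc i)) \<longrightarrow>
        (\<Sum>i\<in>{1..m}. \<bar>g (t i) - g (t (i - 1))\<bar>) \<le> B)"

text \<open>Positive part of the distributional derivative of a left-continuous g on [a,b):
  sup over partitions a = t_0 < ... < t_m = b of the sums of positive increments.\<close>
definition pos_deriv_measure :: "(real \<Rightarrow> real) \<Rightarrow> real \<Rightarrow> real \<Rightarrow> real" where
  "pos_deriv_measure g a b =
     Sup {(\<Sum>i\<in>{1..m}. max 0 (g (t i) - g (t (i - 1)))) | (t::nat \<Rightarrow> real) m.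
            t 0 = a \<and> t m = b \<and> (\<forall>i<m. t i < t (Suc i))}"

end

theory Submission
  imports Defs
begin

text \<open>Let \<open>D = {f > g}\<close> and \<open>\<mu>(x) = |[s,x) \<inter> D|\<close>. The function \<open>f - g + C \<mu>\<close> is
  nondecreasing: right of a point of contact \<open>f = g\<close> it cannot decrease since \<open>f \<ge> g\<close>;
  right of a point of \<open>D\<close>, (i) freezes \<open>f\<close> and (iii) lets \<open>g\<close> grow by at most \<open>C\<close>
  times the length, which \<open>C \<mu>\<close> compensates; left-continuity turns this local
  monotonicity into a global one. Hence \<open>f + C \<mu>\<close>, being nondecreasing as well, dominates
  every positive increment of \<open>g\<close>, and any sum of them telescopes.\<close>

text \<open>\<open>W\<close> is open in the lower-limit topology; points of \<open>W\<close> outside its interior have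
  pairwise disjoint right intervals, so there are only countably many of them.\<close>

lemma sets_lborel_if_right_neighbourhoods:
  fixes W :: "real set"
  assumes right: "\<And>x. x \<in> W \<Longrightarrow> \<exists>y>x. {x..<y} \<subseteq> W"
  shows "W \<in> sets lborel"
proof -
  obtain Y where Y: "\<And>x. x \<in> W \<Longrightarrow> x < Y x \<and> {x..<Y x} \<subseteq> W"
    using right by metis
  have "\<exists>q\<in>\<rat>. x < q \<and> q < Y x" if "x \<in> W" for x
    using Rats_dense_in_real Y[OF that] by blast
  then obtain Q where Q: "\<And>x. x \<in> W \<Longrightarrow> Q x \<in> \<rat> \<and> x < Q x \<and> Q x < Y x"
    by metis
  let ?D = "W - interior W"
  have Q_neq: "Q x \<noteq> Q x'" if "x \<in> ?D" "x' \<in> ?D" "x < x'" for x x'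
  proof
    assume "Q x = Q x'"
    then have "x' \<in> {x<..<Y x}" using Q[of x] Q[of x'] that by auto
    moreover have "{x<..<Y x} \<subseteq> interior W" using Y[of x] that by (intro interior_maximal) auto
    ultimately show False using that by blast
  qed
  have "countable (Q ` ?D)"
    using Q by (intro countable_subset[OF _ countable_rat]) auto
  moreover have "inj_on Q ?D"
  proof (rule inj_onI)
    fix x x' assume "x \<in> ?D" "x' \<in> ?D" "Q x = Q x'"
    then show "x = x'" using Q_neq[of x x'] Q_neq[of x' x] by (cases x x' rule: linorder_cases) auto
  qed
  ultimately have "countable ?D" by (rule countable_image_inj_on)
  then have "?D \<in> sets lborel" using countable_imp_null_set_lborel by blast
  moreover have "interior W \<in> sets lborel" by simp
  ultimately have "interior W \<union> ?D \<in> sets lborel" by (intro sets.Un)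
  moreover have "interior W \<union> ?D = W" using interior_subset by blast
  ultimately show ?thesis by simp
qed

lemma measure_Ico_Int_split:
  fixes W :: "real set"
  assumes W: "W \<in> sets lborel" and "a \<le> x" "x \<le> y"
  shows "measure lborel ({a..<y} \<inter> W) = measure lborel ({a..<x} \<inter> W) + measure lborel ({x..<y} \<inter> W)"
proof -
  have finite: "emeasure lborel ({c..<d} \<inter> W) \<noteq> \<infinity>" for c d :: real
    using emeasure_bounded_finite[of "{c..<d} \<inter> W"] by (simp add: bounded_Int)
  have "{a..<y} \<inter> W = ({a..<x} \<inter> W) \<union> ({x..<y} \<inter> W)" using assms by auto
  moreover have "measure lborel (({a..<x} \<inter> W) \<union> ({x..<y} \<inter> W))
      = measure lborel ({a..<x} \<inter> W) + measure lborel ({x..<y} \<inter> W)"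
    using W finite by (intro measure_Union) auto
  ultimately show ?thesis by simp
qed

lemma mono_on_if_eventually_right_mono:
  fixes \<psi> :: "real \<Rightarrow> real"
  assumes right: "\<And>x. a \<le> x \<Longrightarrow> x < b \<Longrightarrow> \<forall>\<^sub>F y in at_right x. \<psi> x \<le> \<psi> y"
    and left: "\<And>z c. a < z \<Longrightarrow> z \<le> b \<Longrightarrow> (\<forall>\<^sub>F y in at_left z. c \<le> \<psi> y) \<Longrightarrow> c \<le> \<psi> z"
  shows "mono_on {a..b} \<psi>"
proof (rule mono_onI)
  fix s t assume s: "s \<in> {a..b}" and t: "t \<in> {a..b}" and "s \<le> t"
  define S where "S = {x \<in> {s..t}. \<forall>y\<in>{s..x}. \<psi> s \<le> \<psi> y}"
  define z where "z = Sup S"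
  have "s \<in> S" using \<open>s \<le> t\<close> by (simp add: S_def)
  have bdd: "bdd_above S" by (rule bdd_aboveI[of _ t]) (simp add: S_def)
  have "s \<le> z" using \<open>s \<in> S\<close> bdd by (simp add: z_def cSup_upper)
  have "z \<le> t" unfolding z_def using \<open>s \<in> S\<close> by (intro cSup_least) (auto simp: S_def)
  have below: "\<psi> s \<le> \<psi> y" if y: "s \<le> y" "y < z" for y
  proof -
    obtain x where "x \<in> S" "y < x" using less_cSupD[of S y] \<open>s \<in> S\<close> y by (auto simp: z_def)
    then show ?thesis using y by (auto simp: S_def)
  qed
  have "\<psi> s \<le> \<psi> z"
  proof (cases "s < z")
    case True
    then have "\<forall>\<^sub>F y in at_left z. \<psi> s \<le> \<psi> y"
      using below by (intro eventually_at_leftI[of s]) auto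
    then show ?thesis using left True s t \<open>z \<le> t\<close> by simp
  qed (use \<open>s \<le> z\<close> in simp)
  then have "\<psi> s \<le> \<psi> y" if "y \<in> {s..z}" for y
    using below[of y] that by (cases "y < z") auto
  then have "z \<in> S" using \<open>s \<le> z\<close> \<open>z \<le> t\<close> by (simp add: S_def)
  have "z = t"
  proof (rule ccontr)
    assume "z \<noteq> t"
    with \<open>z \<le> t\<close> have "z < t" by simp
    then obtain u where "u > z" and u: "\<And>y. z < y \<Longrightarrow> y < u \<Longrightarrow> \<psi> z \<le> \<psi> y"
      using right[of z] s t \<open>s \<le> z\<close> by (auto simp: eventually_at_right_field)
    define z' where "z' = min ((z + u) / 2) t"
    have "\<psi> s \<le> \<psi> y" if y: "y \<in> {s..z'}" for y
    proof (cases "y \<le> z")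
      case True
      then show ?thesis using \<open>z \<in> S\<close> y by (simp add: S_def)
    next
      case False
      then have "\<psi> z \<le> \<psi> y" using u[of y] y \<open>u > z\<close> by (simp add: z'_def)
      then show ?thesis using \<open>\<psi> s \<le> \<psi> z\<close> by linarith
    qed
    then have "z' \<in> S" using \<open>s \<le> z\<close> \<open>z < t\<close> \<open>u > z\<close> by (simp add: S_def z'_def)
    then have "z' \<le> z" using bdd by (simp add: z_def cSup_upper)
    then show False using \<open>u > z\<close> \<open>z < t\<close> by (auto simp: z'_def min_le_iff_disj)
  qed
  then show "\<psi> s \<le> \<psi> t" using \<open>z \<in> S\<close> by (simp add: S_def)
qed

lemma pos_deriv_measure_le_increment:
  fixes g F :: "real \<Rightarrow> real"
  assumes "a \<le> b"
    and incr: "\<And>x y. a \<le> x \<Longrightarrow> x \<le> y \<Longrightarrow> y \<le> b \<Longrightarrow> max 0 (g y - g x) \<le> F y - F x"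
  shows "pos_deriv_measure g a b \<le> F b - F a"
  unfolding pos_deriv_measure_def
proof (rule cSup_least)
  let ?t = "\<lambda>i::nat. if i = 0 then a else b"
  let ?m = "if a = b then 0 else 1::nat"
  show "{\<Sum>i\<in>{1..m}. max 0 (g (t i) - g (t (i - 1))) | t m.
          t 0 = a \<and> t m = b \<and> (\<forall>i<m. t i < t (Suc i))} \<noteq> {}"
    using \<open>a \<le> b\<close> by (auto split: if_splits intro!: exI[of _ ?t] exI[of _ ?m])
next
  fix s assume "s \<in> {\<Sum>i\<in>{1..m}. max 0 (g (t i) - g (t (i - 1))) | t m.
                   t 0 = a \<and> t m = b \<and> (\<forall>i<m. t i < t (Suc i))}"
  then obtain t m where s: "s = (\<Sum>i\<in>{1..m}. max 0 (g (t i) - g (t (i - 1))))"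
    and t: "t 0 = a" "t m = b" "\<forall>i<m. t i < t (Suc i)" by blast
  have step: "t (min i m) \<le> t (min (Suc i) m)" for i
    using t(3) by (cases "i < m") (auto simp: less_imp_le)
  have t_mono: "t i \<le> t j" if "i \<le> j" "j \<le> m" for i j
    using lift_Suc_mono_le[of "\<lambda>i. t (min i m)", OF step \<open>i \<le> j\<close>] that by simp
  have "s \<le> (\<Sum>i\<in>{1..m}. F (t i) - F (t (i - 1)))"
    unfolding s using t t_mono by (intro sum_mono incr) auto
  also have "\<dots> = F (t m) - F (t 0)"
    by (induction m) (simp_all add: sum.cl_ivl_Suc)
  also have "\<dots> = F b - F a" using t by simp
  finally show "s \<le> F b - F a" .
qed

locale frozen_envelope =
  fixes T C :: real and f g :: "real \<Rightarrow> real"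
  assumes C_pos: "C > 0"
    and f_mono: "mono_on {0<..<T} f"
    and f_leftcont: "\<forall>t\<in>{0<..<T}. continuous (at_left t) f"
    and g_leftcont: "\<forall>t\<in>{0<..<T}. continuous (at_left t) g"
    and f_ge_g: "\<forall>t\<in>{0<..<T}. f t \<ge> g t"
    and frozen: "\<forall>\<epsilon>>0. \<forall>t\<in>{0<..<T}. f t > g t + \<epsilon> \<longrightarrow>
                   (\<forall>t'\<in>{0<..<T}. 0 \<le> t' - t \<and> t' - t < \<epsilon> / C \<longrightarrow> f t' = f t \<and> f t' > g t')"
    and slope_bound: "\<forall>a b. {a..<b} \<subseteq> {0<..<T} \<and> (\<forall>t\<in>{a..<b}. f t > g t) \<longrightarrow>
                     (\<forall>t1\<in>{a..<b}. \<forall>t2\<in>{a..<b}. t1 < t2 \<longrightarrow> g t2 - g t1 \<le> C * (t2 - t1))"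
begin

definition detached :: "real set" where
  "detached = {t \<in> {0<..<T}. g t < f t}"

lemma detached_right_interval:
  assumes "x \<in> detached"
  obtains u where "x < u" "{x..<u} \<subseteq> detached"
    and "\<forall>y\<in>{x..<u}. f y = f x \<and> g y - g x \<le> C * (y - x)"
proof -
  define e where "e = (f x - g x) / 2"
  define u where "u = min (x + e / C) T"
  have x: "x \<in> {0<..<T}" "0 < e" "g x + e < f x"
    using assms by (auto simp: detached_def e_def field_simps)
  have "x < u" using x C_pos by (simp add: u_def)
  have y_range: "y \<in> {0<..<T} \<and> 0 \<le> y - x \<and> y - x < e / C" if "y \<in> {x..<u}" for y
    using that x by (auto simp: u_def)
  have frozen_at: "f y = f x \<and> g y < f y" if "y \<in> {x..<u}" for y
    using frozen[rule_format, OF x(2,1,3)] y_range[OF that] by blast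
  have sub: "{x..<u} \<subseteq> detached"
    unfolding detached_def using frozen_at y_range by blast
  have "g y - g x \<le> C * (y - x)" if "y \<in> {x..<u}" for y
  proof (cases "y = x")
    case False
    have "{x..<u} \<subseteq> {0<..<T} \<and> (\<forall>t\<in>{x..<u}. g t < f t)"
      using sub by (auto simp: detached_def)
    then show ?thesis
      using slope_bound[rule_format, of x u x y] False that \<open>x < u\<close> by auto
  qed simp
  with frozen_at have "\<forall>y\<in>{x..<u}. f y = f x \<and> g y - g x \<le> C * (y - x)" by blast
  with \<open>x < u\<close> sub show ?thesis by (rule that)
qed

lemma detached_borel: "detached \<in> sets lborel"
proof (rule sets_lborel_if_right_neighbourhoods)
  fix x assume "x \<in> detached"
  then obtain u where "x < u" "{x..<u} \<subseteq> detached" by (rule detached_right_interval)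
  then show "\<exists>y>x. {x..<y} \<subseteq> detached" by blast
qed

lemma diff_decrease_le_detached_measure:
  assumes "0 < s" "s \<le> t" "t < T"
  shows "f s - g s \<le> f t - g t + C * measure lborel ({s..<t} \<inter> detached)"
proof -
  define \<mu> where "\<mu> x = measure lborel ({s..<x} \<inter> detached)" for x
  have \<mu>_diff: "\<mu> y - \<mu> x = measure lborel ({x..<y} \<inter> detached)" if "s \<le> x" "x \<le> y" for x y
    using measure_Ico_Int_split[OF detached_borel that] by (simp add: \<mu>_def)
  have \<mu>_mono: "\<mu> x \<le> \<mu> y" if "s \<le> x" "x \<le> y" for x y
    using \<mu>_diff[OF that] measure_nonneg[of lborel "{x..<y} \<inter> detached"] by linarith
  define \<psi> where "\<psi> x = f x - g x + C * \<mu> x" for x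
  have "mono_on {s..t} \<psi>"
  proof (rule mono_on_if_eventually_right_mono)
    fix x assume x: "s \<le> x" "x < t"
    show "\<forall>\<^sub>F y in at_right x. \<psi> x \<le> \<psi> y"
    proof (cases "x \<in> detached")
      case False
      have "x \<in> {0<..<T}" using x assms by auto
      moreover have "g x \<le> f x" using f_ge_g \<open>x \<in> {0<..<T}\<close> by blast
      ultimately have "f x = g x" using False by (auto simp: detached_def)
      have "\<psi> x \<le> \<psi> y" if y: "y \<in> {x<..<T}" for y
      proof -
        have "g y \<le> f y" using f_ge_g y x assms by auto
        moreover have "C * \<mu> x \<le> C * \<mu> y" using \<mu>_mono[of x y] x y C_pos by simp
        ultimately show ?thesis using \<open>f x = g x\<close> by (simp add: \<psi>_def)
      qed
      then show ?thesis using x assms by (intro eventually_at_rightI[of x T]) auto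
    next
      case True
      then obtain u where "x < u" "{x..<u} \<subseteq> detached"
        and u: "\<forall>y\<in>{x..<u}. f y = f x \<and> g y - g x \<le> C * (y - x)"
        by (rule detached_right_interval)
      have "\<psi> x \<le> \<psi> y" if y: "y \<in> {x<..<u}" for y
      proof -
        have "{x..<y} \<inter> detached = {x..<y}" using \<open>{x..<u} \<subseteq> detached\<close> y by auto
        then have "\<mu> y - \<mu> x = y - x" using \<mu>_diff[of x y] x y by simp
        then have "C * (\<mu> y - \<mu> x) = C * (y - x)" by simp
        moreover note right_diff_distrib[of C "\<mu> y" "\<mu> x"]
        moreover have "f y = f x" "g y - g x \<le> C * (y - x)" using bspec[OF u, of y] y by auto
        ultimately show ?thesis unfolding \<psi>_def by linarith
      qed
      then show ?thesis using \<open>x < u\<close> by (intro eventually_at_rightI[of x u]) auto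
    qed
  next
    fix z c assume z: "s < z" "z \<le> t" and ev: "\<forall>\<^sub>F y in at_left z. c \<le> \<psi> y"
    have "((\<lambda>y. f y - g y) \<longlongrightarrow> f z - g z) (at_left z)"
      using f_leftcont g_leftcont z assms by (intro tendsto_diff) (auto simp: continuous_within)
    moreover have "\<forall>\<^sub>F y in at_left z. c - C * \<mu> z \<le> f y - g y"
      using ev eventually_at_left_real[OF z(1)]
    proof eventually_elim
      case (elim y)
      then have "C * \<mu> y \<le> C * \<mu> z" using \<mu>_mono[of y z] C_pos by simp
      then show ?case using elim by (simp add: \<psi>_def)
    qed
    ultimately have "c - C * \<mu> z \<le> f z - g z" by (rule tendsto_lowerbound) simp
    then show "c \<le> \<psi> z" by (simp add: \<psi>_def)
  qed
  then have "\<psi> s \<le> \<psi> t" by (rule mono_onD) (use assms in auto)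
  then show ?thesis by (simp add: \<psi>_def \<mu>_def)
qed

lemma positive_increment_le:
  assumes "0 < s" "s \<le> t" "t < T"
  shows "max 0 (g t - g s) \<le> f t - f s + C * measure lborel ({s..<t} \<inter> detached)"
proof -
  have "f s \<le> f t" by (rule mono_onD[OF f_mono]) (use assms in auto)
  moreover have "0 \<le> C * measure lborel ({s..<t} \<inter> detached)" using C_pos by simp
  ultimately show ?thesis using diff_decrease_le_detached_measure[OF assms] by linarith
qed

end

theorem lemma7p2:
  fixes T C :: real and f g :: "real \<Rightarrow> real"
  assumes T_pos: "T > 0"
    and f_mono: "mono_on {0<..<T} f"
    and g_bv: "bounded_variation_on g {0<..<T}"
    and f_leftcont: "\<forall>t\<in>{0<..<T}. continuous (at_left t) f"
    and g_leftcont: "\<forall>t\<in>{0<..<T}. continuous (at_left t) g"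
    and f_bdd: "bounded (f ` {0<..<T})"
    and g_bdd: "bounded (g ` {0<..<T})"
    and f_ge_g: "\<forall>t\<in>{0<..<T}. f t \<ge> g t"
    and C_pos: "C > 0"
    and cond_i: "\<forall>\<epsilon>>0. \<forall>t\<in>{0<..<T}. f t > g t + \<epsilon> \<longrightarrow>
                   (\<forall>t'\<in>{0<..<T}. 0 \<le> t' - t \<and> t' - t < \<epsilon> / C \<longrightarrow> f t' = f t \<and> f t' > g t')"
    and cond_ii: "\<forall>t\<in>{0<..<T}. Lim (at_right t) f - f t = max 0 (Lim (at_right t) g - g t)"
    and cond_iii: "\<forall>a b. {a..<b} \<subseteq> {0<..<T} \<and> (\<forall>t\<in>{a..<b}. f t > g t) \<longrightarrow>
                     (\<forall>t1\<in>{a..<b}. \<forall>t2\<in>{a..<b}. t1 < t2 \<longrightarrow> g t2 - g t1 \<le> C * (t2 - t1))"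
  shows "\<forall>a b. 0 < a \<and> a \<le> b \<and> b < T \<longrightarrow>
           pos_deriv_measure g a b \<le> f b - f a + C * measure lborel ({a..<b} \<inter> {t. f t > g t})"
proof (intro allI impI)
  interpret frozen_envelope T C f g
    using C_pos f_mono f_leftcont g_leftcont f_ge_g cond_i cond_iii by (rule frozen_envelope.intro)
  fix a b assume ab: "0 < a \<and> a \<le> b \<and> b < T"
  define F where "F x = f x + C * measure lborel ({a..<x} \<inter> detached)" for x
  have "pos_deriv_measure g a b \<le> F b - F a"
  proof (rule pos_deriv_measure_le_increment)
    fix x y assume xy: "a \<le> x" "x \<le> y" "y \<le> b"
    then have "F y - F x = f y - f x + C * measure lborel ({x..<y} \<inter> detached)"
      using measure_Ico_Int_split[OF detached_borel, of a x y] by (simp add: F_def algebra_simps)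
    then show "max 0 (g y - g x) \<le> F y - F x" using positive_increment_le[of x y] xy ab by simp
  qed (use ab in simp)
  moreover have "{a..<b} \<inter> detached = {a..<b} \<inter> {t. f t > g t}" using ab by (auto simp: detached_def)
  ultimately show "pos_deriv_measure g a b \<le> f b - f a + C * measure lborel ({a..<b} \<inter> {t. f t > g t})"
    by (simp add: F_def)
qed

end
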